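(* Let $n$ and $m$ be integers with $n\ge 1$ and $0\le m\le n$, and let $\theta>0$ be real. Then $$S'_{n+1,m+1}(\theta)=\frac{\theta^{m}}{(\theta+1)_n}\,\frac{1}{2\pi i}\int_{\mathcal C_R}\frac{(z+1)_n}{z^{m}}\,\frac{dz}{z-\theta},$$ for every $R>\theta$, where $\mathcal C_R$ is the circle $|z|=R$ in the complex plane, traversed once counterclockwise.
   Context: For a complex number $\alpha$ and an integer $n\ge0$, the Pochhammer symbol is $(\alpha)_0=1$, $(\alpha)_n=\alpha(\alpha+1)\cdots(\alpha+n-1)$. The Stirling numbers of the first kind $S_n^{(k)}$ ($0\le k\le n$) are defined by the polynomial identity $(\theta)_n=\sum_{k=0}^n(-1)^{n-k}S_n^{(k)}\theta^k$. For integers $0\le m\le n$ and real $\theta>0$, define $$S'_{n,m}(\theta)=\frac{1}{(\theta)_n}\sum_{k=m}^n(-1)^{n-k}S_n^{(k)}\theta^k .$$ *)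

theory Defs
  imports "HOL-Complex_Analysis.Complex_Analysis" "HOL-Combinatorics.Stirling"
begin

(* Signed Stirling numbers of the first kind S_n^(k), characterised by
   (theta)_n = sum_k (-1)^(n-k) S_n^(k) theta^k; the library's unsigned
   numbers satisfy (theta)_n = sum_k stirling n k theta^k. *)
definition stirling1_signed :: "nat \<Rightarrow> nat \<Rightarrow> int" where
  "stirling1_signed n k = (-1) ^ (n - k) * int (stirling n k)"

definition S' :: "nat \<Rightarrow> nat \<Rightarrow> real \<Rightarrow> real" where
  "S' n m \<theta> = (1 / pochhammer \<theta> n) *
     (\<Sum>k=m..n. (-1) ^ (n - k) * of_int (stirling1_signed n k) * \<theta> ^ k)"

end

theory Submission
  imports Defs
begin

(* Expanding (z + 1)_n = sum_j S(n+1, j+1) z^j in unsigned Stirling numbers splits the integrand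
   into the terms z^(j-m) / (z - theta) for j >= m, which integrate to 2 pi i theta^(j-m) by
   Cauchy's formula, and the terms 1 / (z^k (z - theta)) with k >= 1, whose integrals vanish
   (the partial fraction 1/(z^k (z - theta)) = (1/(z^(k-1) (z - theta)) - 1/z^k) / theta lowers k).
   The surviving sum is theta^(-m-1) sum_{k>m} S(n+1, k) theta^k; the two signs in S' cancel and
   (theta)_(n+1) = theta (theta + 1)_n. *)

lemma pochhammer_plus_one_stirling:
  fixes x :: "'a :: comm_semiring_1"
  shows "pochhammer (x + 1) n = (\<Sum>j\<le>n. of_nat (stirling (Suc n) (Suc j)) * x ^ j)"
proof (induction n)
  case 0
  then show ?case by simp
next
  case (Suc n)
  define P where "P = (\<Sum>j\<le>n. of_nat (stirling (Suc n) (Suc j)) * x ^ j)"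
  have "(\<Sum>j\<le>Suc n. of_nat (stirling (Suc (Suc n)) (Suc j)) * x ^ j) =
      of_nat (Suc n) * (\<Sum>j\<le>Suc n. of_nat (stirling (Suc n) (Suc j)) * x ^ j) +
      (\<Sum>j\<le>Suc n. of_nat (stirling (Suc n) j) * x ^ j)"
    unfolding stirling.simps(4)[of "Suc n"]
    by (simp add: sum.distrib sum_distrib_left algebra_simps del: stirling.simps)
  also have "(\<Sum>j\<le>Suc n. of_nat (stirling (Suc n) (Suc j)) * x ^ j) = P"
    unfolding P_def by (simp del: stirling.simps)
  also have "(\<Sum>j\<le>Suc n. of_nat (stirling (Suc n) j) * x ^ j) = x * P"
    unfolding P_def
    by (subst sum.atMost_Suc_shift) (simp add: sum_distrib_left algebra_simps del: stirling.simps)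
  also have "of_nat (Suc n) * P + x * P = pochhammer (x + 1) (Suc n)"
    by (simp add: pochhammer_Suc Suc.IH[folded P_def, symmetric] algebra_simps)
  finally show ?case ..
qed

lemma S'_eq_stirling:
  "S' n m \<theta> = (\<Sum>k=m..n. real (stirling n k) * \<theta> ^ k) / pochhammer \<theta> n"
proof -
  have "(-1) ^ (n - k) * of_int (stirling1_signed n k) = real (stirling n k)" for k
    by (simp add: stirling1_signed_def flip: mult.assoc power_add power_mult_distrib)
  then show ?thesis
    by (simp add: S'_def mult.assoc)
qed

lemma S'_Suc_Suc:
  assumes "\<theta> \<noteq> 0"
  shows "S' (Suc n) (Suc m) \<theta> =
    \<theta> ^ m / pochhammer (\<theta> + 1) n * (\<Sum>j=m..n. real (stirling (Suc n) (Suc j)) * \<theta> ^ (j - m))"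
proof -
  have "(\<Sum>k=Suc m..Suc n. real (stirling (Suc n) k) * \<theta> ^ k)
      = (\<Sum>j=m..n. real (stirling (Suc n) (Suc j)) * \<theta> ^ Suc j)"
    by (simp only: sum.shift_bounds_cl_Suc_ivl)
  also have "\<dots> = \<theta> * \<theta> ^ m * (\<Sum>j=m..n. real (stirling (Suc n) (Suc j)) * \<theta> ^ (j - m))"
    by (auto simp: sum_distrib_left algebra_simps simp flip: power_add intro!: sum.cong)
  finally show ?thesis
    using assms by (simp add: S'_eq_stirling pochhammer_rec)
qed

lemma has_contour_integral_inverse_power_circlepath:
  assumes "R > 0"
  shows "((\<lambda>z. 1 / (z - c) ^ Suc k) has_contour_integral (if k = 0 then 2 * pi * \<i> else 0))
           (circlepath c R)"
proof -
  have "((\<lambda>z. (\<lambda>_. 1) z / (z - c) ^ Suc k) has_contour_integral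
          (2 * pi * \<i> / fact k * (deriv ^^ k) (\<lambda>_. 1) c)) (circlepath c R)"
    by (rule Cauchy_has_contour_integral_higher_derivative_circlepath) (use assms in auto)
  moreover have "(deriv ^^ k) (\<lambda>_. 1 :: complex) = (\<lambda>_. if k = 0 then 1 else 0)"
    by (induction k) auto
  ultimately show ?thesis
    by (cases k) auto
qed

lemma has_contour_integral_inverse_power_div_pole:
  assumes "w \<noteq> 0" "norm w < R"
  shows "((\<lambda>z. 1 / (z ^ k * (z - w))) has_contour_integral (if k = 0 then 2 * pi * \<i> else 0))
           (circlepath 0 R)"
proof (induction k)
  case 0
  have "((\<lambda>z. (\<lambda>_. 1) z / (z - w)) has_contour_integral (2 * of_real pi * \<i> * 1))
          (circlepath 0 R)"
    by (rule Cauchy_integral_circlepath) (use assms in auto)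
  then show ?case
    by simp
next
  case (Suc k)
  have "R > 0"
    using assms(2) by (meson le_less_trans norm_ge_zero)
  then have "((\<lambda>z. 1 / w * (1 / (z ^ k * (z - w)) - 1 / (z - 0) ^ Suc k))
      has_contour_integral 0) (circlepath 0 R)"
    using has_contour_integral_lmul[OF has_contour_integral_diff[OF Suc
          has_contour_integral_inverse_power_circlepath[of R 0 k]], of "1 / w"]
    by simp
  then have "((\<lambda>z. 1 / (z ^ Suc k * (z - w))) has_contour_integral 0) (circlepath 0 R)"
  proof (rule has_contour_integral_eq)
    fix z assume "z \<in> path_image (circlepath 0 R)"
    then have "z \<noteq> 0" "z \<noteq> w"
      using assms by auto
    then show "1 / w * (1 / (z ^ k * (z - w)) - 1 / (z - 0) ^ Suc k) =
        1 / (z ^ Suc k * (z - w))"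
      using assms by (simp add: field_simps)
  qed
  then show ?case
    by simp
qed

lemma has_contour_integral_power_div_pole:
  assumes "norm w < R"
  shows "((\<lambda>z. z ^ p / (z - w)) has_contour_integral (2 * pi * \<i> * w ^ p)) (circlepath 0 R)"
proof -
  have "((\<lambda>z. (\<lambda>z. z ^ p) z / (z - w)) has_contour_integral (2 * of_real pi * \<i> * w ^ p))
          (circlepath 0 R)"
    by (rule Cauchy_integral_circlepath)
      (use assms in \<open>auto intro!: continuous_intros holomorphic_intros\<close>)
  then show ?thesis
    by simp
qed

lemma has_contour_integral_monomial_div_pole:
  assumes "w \<noteq> 0" "norm w < R"
  shows "((\<lambda>z. z ^ j / z ^ m / (z - w)) has_contour_integral
           (if m \<le> j then 2 * pi * \<i> * w ^ (j - m) else 0)) (circlepath 0 R)"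
proof (cases "m \<le> j")
  case True
  have "((\<lambda>z. z ^ j / z ^ m / (z - w)) has_contour_integral (2 * pi * \<i> * w ^ (j - m)))
          (circlepath 0 R)"
    using has_contour_integral_power_div_pole[OF assms(2), of "j - m"]
  proof (rule has_contour_integral_eq)
    fix z assume "z \<in> path_image (circlepath 0 R)"
    then have "z \<noteq> 0"
      using assms by auto
    then show "z ^ (j - m) / (z - w) = z ^ j / z ^ m / (z - w)"
      using True by (simp add: power_diff)
  qed
  with True show ?thesis
    by simp
next
  case False
  have "((\<lambda>z. 1 / (z ^ (m - j) * (z - w))) has_contour_integral 0) (circlepath 0 R)"
    using has_contour_integral_inverse_power_div_pole[OF assms, of "m - j"] False by simp
  then have "((\<lambda>z. z ^ j / z ^ m / (z - w)) has_contour_integral 0) (circlepath 0 R)"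
  proof (rule has_contour_integral_eq)
    fix z assume "z \<in> path_image (circlepath 0 R)"
    then have "z \<noteq> 0"
      using assms by auto
    moreover have "z ^ m = z ^ j * z ^ (m - j)"
      using False by (simp flip: power_add)
    ultimately show "1 / (z ^ (m - j) * (z - w)) = z ^ j / z ^ m / (z - w)"
      by simp
  qed
  with False show ?thesis
    by simp
qed

theorem theorem1:
  fixes n m :: nat and \<theta> R :: real
  assumes "n \<ge> 1" and "m \<le> n" and "\<theta> > 0" and "R > \<theta>"
  shows "complex_of_real (S' (n + 1) (m + 1) \<theta>) =
    complex_of_real (\<theta> ^ m / pochhammer (\<theta> + 1) n) *
    (1 / (2 * pi * \<i>)) *
    contour_integral (circlepath 0 R)
      (\<lambda>z. pochhammer (z + 1) n / z ^ m / (z - complex_of_real \<theta>))"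
proof -
  define w where "w = complex_of_real \<theta>"
  define c where "c j = (of_nat (stirling (Suc n) (Suc j)) :: complex)" for j
  have w: "w \<noteq> 0" "norm w < R"
    using assms by (auto simp: w_def)
  have "(\<lambda>z. pochhammer (z + 1) n / z ^ m / (z - w)) =
      (\<lambda>z. \<Sum>j\<le>n. c j * (z ^ j / z ^ m / (z - w)))"
    by (simp add: pochhammer_plus_one_stirling c_def sum_divide_distrib)
  moreover have "((\<lambda>z. \<Sum>j\<le>n. c j * (z ^ j / z ^ m / (z - w))) has_contour_integral
      (\<Sum>j\<le>n. c j * (if m \<le> j then 2 * pi * \<i> * w ^ (j - m) else 0))) (circlepath 0 R)"
    by (intro has_contour_integral_sum has_contour_integral_lmul
        has_contour_integral_monomial_div_pole w) auto
  moreover have "(\<Sum>j\<le>n. c j * (if m \<le> j then 2 * pi * \<i> * w ^ (j - m) else 0)) =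
      (\<Sum>j=m..n. c j * (2 * pi * \<i> * w ^ (j - m)))"
    by (rule sum.mono_neutral_cong_right) auto
  moreover have "\<dots> =
      2 * pi * \<i> * complex_of_real (\<Sum>j=m..n. real (stirling (Suc n) (Suc j)) * \<theta> ^ (j - m))"
    by (simp add: c_def w_def sum_distrib_left mult.left_commute del: stirling.simps)
  ultimately show ?thesis
    using assms by (simp add: contour_integral_unique S'_Suc_Suc w_def)
qed
end
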